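(* An Ehresmann connection $\gamma$ on $M\times_NC$ satisfies condition $(C_M)$: $\gamma_M((g_x,\Gamma_x),X)=X-q_*\big(((p_M)_*X)^{h_{\Gamma_x}}_u\big)$ for all $X\in T_{g_x}M$ and $u\in q^{-1}(g_x)$, if and only if, in every induced coordinate system, $\gamma_{klj}=-(y_{al}A^a_{jk}+y_{ak}A^a_{jl})$ for all $j,k,l$.
   Context: $N$ is a connected oriented $n$-manifold, $p_M\colon M\to N$ the bundle of pseudo-Riemannian metrics of a fixed signature $(n^+,n^-)$, $p_C\colon C\to N$ the bundle of linear connections (fibre over $x$: values $\Gamma_x$ at $x$ of linear connections), $p_F\colon F(N)\to N$ the linear frame bundle. Summation over repeated indices. A chart $(x^i)$ induces coordinates $(x^i,y_{ij})$ on $M$ ($y_{ij}=y_{ji}$, $y_{ij}(g_x)=g_x(\partial_i,\partial_j)$), $(x^i,A^i_{jk})$ on $C$ ($A^i_{jk}(\Gamma_x)=\Gamma^i_{jk}(x)$, Christoffel symbols with $\nabla_{\partial_j}\partial_k=\Gamma^i_{jk}\partial_i$), and $(x^i,x^i_j)$ on $F(N)$ (a frame is $X_j=x^i_j\partial_i$). An Ehresmann connection on $p\colon M\times_NC\to N$ is a $V(p)$-valued 1-form $\gamma$ with $\gamma(X)=X$ for vertical $X$; locally $\gamma=\sum_{i\le j}(dy_{ij}+\gamma_{ijk}dx^k)\otimes\partial/\partial y_{ij}+(dA^i_{jk}+\gamma^i_{jkl}dx^l)\otimes\partial/\partial A^i_{jk}$, and $\gamma_M=\sum_{i\le j}(dy_{ij}+\gamma_{ijk}dx^k)\otimes\partial/\partial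 y_{ij}$ is its $M$-component, viewed as a map $\gamma_M\colon \mathrm{pr}_1^*TM\to\mathrm{pr}_1^*V(p_M)$ (so $\gamma_M((g_x,\Gamma_x),X)$ makes sense for $X\in T_{g_x}M$). The map $q\colon F(N)\to M$ sends a frame with dual coframe $(w^h)$ to $\sum_h\varepsilon_hw^h\otimes w^h$, $\varepsilon_h=1$ for $h\le n^+$, $-1$ otherwise. For $Y\in T_xN$ and $u\in F_x(N)$, $Y^{h_{\Gamma_x}}_u$ is the horizontal lift at $u$ with respect to (any connection with value) $\Gamma_x$; locally $(\partial/\partial x^j)^{h_\Gamma}_u=\partial/\partial x^j-\Gamma^i_{jk}x^k_l\,\partial/\partial x^i_l$. The right-hand side of $(C_M)$ does not depend on the choice of $u\in q^{-1}(g_x)$. *)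

theory Defs
  imports "HOL-Analysis.Analysis"
begin

text \<open>Local coordinate model over one chart (x^i) of N, with index type 'n
 (linearly ordered, so that the coordinates y_ij with i <= j make sense and the
 frame index h can be compared with n^+).
 Matrices are real^'n^'n with M $ row $ col.
 - a metric value g_x is the matrix y with y $ i $ j = y_ij;
 - a connection value Gamma_x is A with A i j k = A^i_jk = Gamma^i_jk;
 - a frame u is the invertible matrix E with E $ i $ l = x^i_l (X_l = x^i_l d_i);
 - a tangent vector to M at g_x is (xi, eta): xi $ k the dx^k-component and
   eta the symmetric matrix of the dy_ij-components;
 - a tangent vector to F(N) at u is (xi, dE), dE $ i $ l the dx^i_l-component.\<close>

type_synonym 'n vect = "real^'n"
type_synonym 'n mat = "real^'n^'n"
type_synonym 'n tvec = "(real^'n) \<times> (real^'n^'n)"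

definition sym_mat :: "'n::finite mat \<Rightarrow> bool" where
  "sym_mat y \<longleftrightarrow> transpose y = y"

definition posdef_on :: "'n::finite mat \<Rightarrow> (real^'n) set \<Rightarrow> bool" where
  "posdef_on y V \<longleftrightarrow> (\<forall>v\<in>V. v \<noteq> 0 \<longrightarrow> v \<bullet> (y *v v) > 0)"

text \<open>Fibre of the bundle of pseudo-Riemannian metrics of signature
 (npos, n - npos): nondegenerate symmetric matrices whose maximal
 positive definite subspaces have dimension npos (index of positivity).\<close>
definition metric_fibre :: "nat \<Rightarrow> ('n::finite mat) set" where
  "metric_fibre npos = {y. sym_mat y \<and> det y \<noteq> 0 \<and>
      npos = Max {dim V | V. subspace V \<and> posdef_on y V}}"

text \<open>epsilon_h = 1 for the first npos frame indices, -1 otherwise.\<close>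
definition eps :: "nat \<Rightarrow> 'n::{finite,linorder} \<Rightarrow> real" where
  "eps npos h = (if card {h'. h' \<le> h} \<le> npos then 1 else -1)"

text \<open>q in fibre coordinates: the coframe (w^h) dual to the frame E is given by
 the rows of E^{-1}, w^h(d_a) = E^{-1} $ h $ a; q(u) = sum_h eps_h w^h (x) w^h.\<close>
definition qmat :: "nat \<Rightarrow> ('n::{finite,linorder}) mat \<Rightarrow> 'n mat" where
  "qmat npos E = (let W = matrix_inv E in
      (\<chi> a b. \<Sum>h\<in>UNIV. eps npos h * W $ h $ a * W $ h $ b))"

text \<open>Horizontal lift at the frame E of xi = xi^j d_j w.r.t. the connection value A:
 xi^j (d_j - Gamma^i_jk x^k_l d/dx^i_l).\<close>
definition hlift :: "('n::finite \<Rightarrow> 'n \<Rightarrow> 'n \<Rightarrow> real) \<Rightarrow> 'n mat \<Rightarrow> real^'n \<Rightarrow> 'n tvec" where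
  "hlift A E xi = (xi, (\<chi> i l. - (\<Sum>j\<in>UNIV. \<Sum>k\<in>UNIV. A i j k * E $ k $ l * xi $ j)))"

text \<open>Differential at the frame E of q, which in coordinates is (x,E) |-> (x, qmat E).\<close>
definition qstar :: "nat \<Rightarrow> ('n::{finite,linorder}) mat \<Rightarrow> 'n tvec \<Rightarrow> 'n tvec" where
  "qstar npos E v = (fst v, frechet_derivative (qmat npos) (at E) (snd v))"

text \<open>M-component gamma_M of the Ehresmann connection at a point, with
 coefficients G i j k = gamma_ijk (only the entries with i <= j are used),
 applied to X = (xi, eta). The result is the vertical vector
 sum_{i<=j} (eta_ij + gamma_ijk xi^k) d/dy_ij, written as a symmetric matrix.\<close>
definition gammaM :: "('n::{finite,linorder} \<Rightarrow> 'n \<Rightarrow> 'n \<Rightarrow> real) \<Rightarrow> 'n tvec \<Rightarrow> 'n tvec" where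
  "gammaM G X = (0, (\<chi> i j. snd X $ i $ j +
        (\<Sum>k\<in>UNIV. G (min i j) (max i j) k * fst X $ k)))"

definition CM_at :: "nat \<Rightarrow> ('n::{finite,linorder} \<Rightarrow> 'n \<Rightarrow> 'n \<Rightarrow> real) \<Rightarrow> 'n mat
                     \<Rightarrow> ('n \<Rightarrow> 'n \<Rightarrow> 'n \<Rightarrow> real) \<Rightarrow> bool" where
  "CM_at npos G y A \<longleftrightarrow>
     (\<forall>xi eta E. sym_mat eta \<longrightarrow> invertible E \<longrightarrow> qmat npos E = y \<longrightarrow>
        gammaM G (xi, eta) = (xi, eta) - qstar npos E (hlift A E xi))"

end

theory Submission
  imports Defs
begin

text \<open>In coordinates the fibre part of the horizontal lift of \<open>\<xi>\<close> at a frame \<open>E\<close>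
  is \<open>-\<Gamma>(\<xi>) E\<close>, where \<open>\<Gamma>(\<xi>)\<^sup>i\<^sub>k = \<Gamma>\<^sup>i\<^sub>j\<^sub>k \<xi>\<^sup>j\<close>, and \<open>q(E) = E\<^sup>-\<^sup>T S E\<^sup>-\<^sup>1\<close>
  with \<open>S = diag(\<epsilon>)\<close>. Since \<open>d(E\<^sup>-\<^sup>1) = -E\<^sup>-\<^sup>1 dE E\<^sup>-\<^sup>1\<close>, \<open>q\<^sub>*\<close> sends that lift
  to \<open>y \<Gamma>(\<xi>) + \<Gamma>(\<xi>)\<^sup>T y\<close> with \<open>y = q(E)\<close>, whatever the frame. So \<open>(C\<^sub>M)\<close> says
  that the coefficients of \<open>\<gamma>\<^sub>M\<close>, as linear forms in \<open>\<xi>\<close>, are those of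
  \<open>-(y \<Gamma>(\<xi>) + \<Gamma>(\<xi>)\<^sup>T y)\<close>. Deducing these coefficients from \<open>(C\<^sub>M)\<close> needs
  \<open>q\<^sup>-\<^sup>1(y) \<noteq> {}\<close> for every metric of signature \<open>(n\<^sup>+, n\<^sup>-)\<close>: this is Sylvester's
  law of inertia, obtained by normalising a \<open>y\<close>-orthogonal basis.\<close>

section \<open>Derivative of the matrix inverse\<close>

interpretation matrix_mult: bounded_bilinear "(**) :: real^'n^'m \<Rightarrow> real^'k^'n \<Rightarrow> real^'k^'m"
  by (rule bilinear_conv_bounded_bilinear[THEN iffD1])
    (auto intro!: linearI simp: bilinear_def matrix_matrix_mult_def vec_eq_iff algebra_simps
      sum.distrib sum_distrib_left)

lemma matrix_mul_matrix_inv: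
  assumes "invertible (E::'a::semiring_1^'n^'n)"
  shows "E ** matrix_inv E = mat 1" and "matrix_inv E ** E = mat 1"
proof -
  have "\<exists>A'. E ** A' = mat 1 \<and> A' ** E = mat 1" using assms invertible_def by blast
  then have "E ** matrix_inv E = mat 1 \<and> matrix_inv E ** E = mat 1"
    unfolding matrix_inv_def by (rule someI_ex)
  then show "E ** matrix_inv E = mat 1" "matrix_inv E ** E = mat 1" by auto
qed

lemma matrix_inv_cramer:
  assumes "det (X::real^'n^'n) \<noteq> 0"
  shows "matrix_inv X = (\<chi> k l. det (\<chi> i j. if j = k then axis l 1 $ i else X $ i $ j) / det X)"
proof -
  have "invertible X" using assms invertible_det_nz by blast
  then have "X *v (matrix_inv X *v axis l 1) = axis l 1" for l
    by (simp add: matrix_vector_mul_assoc matrix_mul_matrix_inv)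
  then have "matrix_inv X *v axis l 1
      = (\<chi> k. det (\<chi> i j. if j = k then axis l 1 $ i else X $ i $ j) / det X)" for l
    using cramer[OF assms] by blast
  moreover have "(A *v axis l 1) $ k = A $ k $ l" for A :: "real^'n^'n" and k l
    by (simp add: matrix_vector_mult_def axis_def if_distrib cong: if_cong)
  ultimately show ?thesis
    by (metis (no_types, lifting) vec_eq_iff vec_lambda_beta)
qed

lemma continuous_on_matrix_inv:
  "continuous_on {X::real^'n^'n. det X \<noteq> 0} matrix_inv"
proof -
  have entry: "continuous_on S (\<lambda>X::real^'n^'n. if c then a else X $ i $ j)" for S c a i j
    by (cases c) (auto intro!: continuous_intros)
  have "continuous_on {X::real^'n^'n. det X \<noteq> 0}
      (\<lambda>X. \<chi> k l. det (\<chi> i j. if j = k then axis l 1 $ i else X $ i $ j) / det X)"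
    unfolding det_def by (intro continuous_intros entry) auto
  then show ?thesis
    by (rule continuous_on_cong[THEN iffD1, OF refl, rotated]) (simp add: matrix_inv_cramer)
qed

lemma isCont_matrix_inv:
  assumes "det (E::real^'n^'n) \<noteq> 0"
  shows "isCont matrix_inv E"
proof -
  have "continuous_on UNIV (det :: real^'n^'n \<Rightarrow> real)"
    unfolding det_def by (intro continuous_intros)
  then have "open {X::real^'n^'n. det X \<noteq> 0}"
    by (simp add: open_Collect_neq continuous_on_const)
  then show ?thesis
    using continuous_on_matrix_inv assms continuous_on_eq_continuous_at by blast
qed

lemma matrix_inv_diff:
  assumes "invertible (E::real^'n^'n)" and "invertible F"
  shows "matrix_inv F - matrix_inv E = - (matrix_inv F ** (F - E) ** matrix_inv E)"
  by (simp add: matrix_mult.diff_left matrix_mult.diff_right matrix_mul_matrix_inv assms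
      flip: matrix_mul_assoc)

lemma matrix_inv_add_remainder:
  assumes "invertible (E::real^'n^'n)" and "invertible (E + h)"
  shows "matrix_inv (E + h) - matrix_inv E - - (matrix_inv E ** h ** matrix_inv E)
    = - ((matrix_inv (E + h) - matrix_inv E) ** h ** matrix_inv E)"
proof -
  have "matrix_inv (E + h) - matrix_inv E = - (matrix_inv (E + h) ** h ** matrix_inv E)"
    using matrix_inv_diff[OF assms] by simp
  then have "matrix_inv (E + h) - matrix_inv E - - (matrix_inv E ** h ** matrix_inv E)
      = - (matrix_inv (E + h) ** h ** matrix_inv E) + matrix_inv E ** h ** matrix_inv E"
    by simp
  also have "\<dots> = - ((matrix_inv (E + h) - matrix_inv E) ** h ** matrix_inv E)"
    by (simp add: matrix_mult.diff_left)
  finally show ?thesis .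
qed

lemma has_derivative_matrix_inv:
  assumes "det (E::real^'n^'n) \<noteq> 0"
  shows "(matrix_inv has_derivative (\<lambda>H. - (matrix_inv E ** H ** matrix_inv E))) (at E)"
proof -
  define W where "W = matrix_inv E"
  have inv_E: "invertible E" using assms invertible_det_nz by blast
  obtain K where K: "K > 0" "\<And>a b. norm ((a::real^'n^'n) ** (b::real^'n^'n)) \<le> norm a * norm b * K"
    using matrix_mult.pos_bounded by blast
  have "bounded_linear (\<lambda>H. - (W ** H ** W))"
    by (intro bounded_linear_minus bounded_linear_compose[OF matrix_mult.bounded_linear_left]
        matrix_mult.bounded_linear_right)
  moreover have "((\<lambda>h. norm (matrix_inv (E + h) - W - - (W ** h ** W)) / norm h) \<longlongrightarrow> 0) (at 0)"
  proof (rule Lim_null_comparison)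
    have "((\<lambda>h. matrix_inv (E + h)) \<longlongrightarrow> W) (at 0)"
      using isCont_matrix_inv[OF assms] unfolding W_def isCont_def
      by (metis LIM_offset_zero add.commute)
    then show "((\<lambda>h. K * K * norm W * norm (matrix_inv (E + h) - W)) \<longlongrightarrow> 0) (at 0)"
      by (intro tendsto_mult_right_zero tendsto_norm_zero) (simp add: LIM_zero)
    have "isCont det E"
      unfolding det_def by (intro continuous_intros)
    then have "((\<lambda>h. det (E + h)) \<longlongrightarrow> det E) (at 0)"
      unfolding isCont_def by (metis LIM_offset_zero add.commute)
    then have "eventually (\<lambda>h. det (E + h) \<noteq> 0) (at 0)"
      using assms by (rule tendsto_imp_eventually_ne)
    then show "eventually (\<lambda>h. norm (norm (matrix_inv (E + h) - W - - (W ** h ** W)) / norm h)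
        \<le> K * K * norm W * norm (matrix_inv (E + h) - W)) (at 0)"
    proof eventually_elim
      case (elim h)
      define D where "D = matrix_inv (E + h) - W"
      have "matrix_inv (E + h) - W - - (W ** h ** W) = - (D ** h ** W)"
        using matrix_inv_add_remainder[OF inv_E] elim
        by (simp add: D_def W_def invertible_det_nz)
      moreover have "norm (D ** h ** W) \<le> K * K * norm W * norm D * norm h"
        using K order_trans[OF K(2)[of "D ** h" W] mult_right_mono[OF mult_right_mono[OF K(2)[of D h]]]]
        by (simp add: algebra_simps)
      ultimately show ?case
        by (cases "h = 0") (simp_all add: D_def divide_le_eq mult.commute)
    qed
  qed
  ultimately show ?thesis
    unfolding has_derivative_at W_def by simp
qed

section \<open>The differential of \<open>q\<close> on horizontal lifts\<close>

lemma bounded_linear_transpose: "bounded_linear (transpose :: real^'n^'m \<Rightarrow> real^'m^'n)"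
  by (rule linear_conv_bounded_linear[THEN iffD1]) (auto intro!: linearI simp: transpose_def vec_eq_iff)

definition signature_matrix :: "nat \<Rightarrow> ('n::{finite,linorder}) mat" where
  "signature_matrix npos = (\<chi> i j. if i = j then eps npos i else 0)"

definition connection_matrix :: "('n::finite \<Rightarrow> 'n \<Rightarrow> 'n \<Rightarrow> real) \<Rightarrow> real^'n \<Rightarrow> 'n mat" where
  "connection_matrix A xi = (\<chi> i k. \<Sum>j\<in>UNIV. A i j k * xi $ j)"

lemma qmat_eq:
  "qmat npos E = transpose (matrix_inv E) ** (signature_matrix npos ** matrix_inv E)"
proof -
  have "(signature_matrix npos ** W) $ h $ b = eps npos h * W $ h $ b" for W :: "'a mat" and h b
    by (simp add: signature_matrix_def matrix_matrix_mult_def if_distrib[of "\<lambda>x. x * _"]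
        cong: if_cong)
  then show ?thesis
    by (simp add: qmat_def Let_def vec_eq_iff matrix_matrix_mult_def transpose_def mult_ac)
qed

lemma has_derivative_qmat:
  fixes E :: "('n::{finite,linorder}) mat" and npos :: nat
  assumes "det E \<noteq> 0"
  defines "W \<equiv> matrix_inv E" and "S \<equiv> signature_matrix npos"
  shows "(qmat npos has_derivative
      (\<lambda>H. transpose W ** (S ** - (W ** H ** W)) + transpose (- (W ** H ** W)) ** (S ** W))) (at E)"
proof -
  note inv = has_derivative_matrix_inv[OF assms(1), folded W_def]
  have "((\<lambda>X. transpose (matrix_inv X)) has_derivative (\<lambda>H. transpose (- (W ** H ** W)))) (at E)"
    using bounded_linear_transpose inv by (rule bounded_linear.has_derivative)
  moreover have "((\<lambda>X. S ** matrix_inv X) has_derivative (\<lambda>H. S ** - (W ** H ** W))) (at E)"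
    using matrix_mult.bounded_linear_right inv by (rule bounded_linear.has_derivative)
  ultimately have "((\<lambda>X. transpose (matrix_inv X) ** (S ** matrix_inv X)) has_derivative
      (\<lambda>H. transpose W ** (S ** - (W ** H ** W)) + transpose (- (W ** H ** W)) ** (S ** W))) (at E)"
    unfolding W_def by (rule matrix_mult.FDERIV)
  moreover have "qmat npos = (\<lambda>X. transpose (matrix_inv X) ** (S ** matrix_inv X))"
    by (rule ext) (simp add: qmat_eq S_def)
  ultimately show ?thesis
    by simp
qed

lemma hlift_eq: "hlift A E xi = (xi, - (connection_matrix A xi ** E))"
proof -
  have "(\<Sum>j\<in>UNIV. \<Sum>k\<in>UNIV. A i j k * E $ k $ l * xi $ j)
      = (\<Sum>k\<in>UNIV. (\<Sum>j\<in>UNIV. A i j k * xi $ j) * E $ k $ l)" for i l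
    by (subst sum.swap) (simp add: sum_distrib_left sum_distrib_right mult_ac)
  then show ?thesis
    by (simp add: hlift_def connection_matrix_def matrix_matrix_mult_def vec_eq_iff sum_negf)
qed

lemma qstar_hlift:
  fixes E :: "('n::{finite,linorder}) mat"
  assumes "invertible E" and "qmat npos E = y"
  shows "qstar npos E (hlift A E xi)
    = (xi, y ** connection_matrix A xi + transpose (connection_matrix A xi) ** y)"
proof -
  define C where "C = connection_matrix A xi"
  define W where "W = matrix_inv E"
  define S where "S = (signature_matrix npos :: 'n mat)"
  have y: "y = transpose W ** (S ** W)"
    using assms(2) by (simp add: qmat_eq W_def S_def)
  txt \<open>The lift direction \<open>-C E\<close> is turned by \<open>d(E\<^sup>-\<^sup>1)\<close> into \<open>W C\<close>.\<close>
  have "W ** - (C ** E) ** W = - (W ** C)"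
    using matrix_mul_matrix_inv[OF assms(1)]
    by (simp add: matrix_mult.minus_left matrix_mult.minus_right W_def flip: matrix_mul_assoc)
  moreover have "frechet_derivative (qmat npos) (at E)
      = (\<lambda>H. transpose W ** (S ** - (W ** H ** W)) + transpose (- (W ** H ** W)) ** (S ** W))"
    using assms(1) unfolding W_def S_def invertible_det_nz
    by (intro frechet_derivative_at[symmetric] has_derivative_qmat)
  ultimately have "frechet_derivative (qmat npos) (at E) (- (C ** E))
      = transpose W ** (S ** (W ** C)) + transpose (W ** C) ** (S ** W)"
    by simp
  also have "\<dots> = y ** C + transpose C ** y"
    by (simp add: y matrix_transpose_mul matrix_mul_assoc)
  finally show ?thesis
    by (simp add: qstar_def hlift_eq C_def)
qed

section \<open>Sylvester's law of inertia\<close>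

lemma sym_mat_form_commute:
  assumes "sym_mat (y::real^'n^'n)"
  shows "u \<bullet> (y *v v) = v \<bullet> (y *v u)"
proof -
  have "u \<bullet> (y *v v) = (transpose y *v u) \<bullet> v"
    by (simp add: dot_lmul_matrix)
  also have "\<dots> = v \<bullet> (y *v u)"
    using assms by (simp add: sym_mat_def inner_commute)
  finally show ?thesis .
qed

lemma form_eq_0_on_subspace:
  assumes "sym_mat (y::real^'n^'n)" and "subspace V" and "\<forall>v\<in>V. v \<bullet> (y *v v) = 0"
    and "u \<in> V" and "w \<in> V"
  shows "u \<bullet> (y *v w) = 0"
proof -
  have "(u + w) \<bullet> (y *v (u + w)) = 0"
    using assms by (simp add: subspace_add)
  then show ?thesis
    using assms sym_mat_form_commute[OF assms(1), of w u]
    by (simp add: matrix_vector_right_distrib inner_add_left inner_add_right)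
qed

lemma form_orthogonal_complement:
  fixes y :: "real^'n^'n"
  assumes "subspace V" and "v \<in> V" and "v \<bullet> (y *v v) \<noteq> 0"
  defines "V' \<equiv> {w \<in> V. v \<bullet> (y *v w) = 0}"
  shows "subspace V'" and "dim V' < dim V"
    and "w \<in> V \<Longrightarrow> w - (v \<bullet> (y *v w) / (v \<bullet> (y *v v))) *\<^sub>R v \<in> V'"
proof -
  show "subspace V'"
    unfolding subspace_def V'_def using assms(1)
    by (auto simp: subspace_0 subspace_add subspace_scale matrix_vector_right_distrib
        inner_add_right matrix_vector_mult_scaleR)
  moreover have "V' \<subseteq> V" "v \<notin> V'"
    using assms(3) by (auto simp: V'_def)
  ultimately have "span V' \<subset> span V"
    using assms(1,2) by (metis psubsetI span_eq_iff span_mono)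
  then show "dim V' < dim V"
    by (rule dim_psubset)
  show "w - (v \<bullet> (y *v w) / (v \<bullet> (y *v v))) *\<^sub>R v \<in> V'" if "w \<in> V"
    using that assms(1-3) unfolding V'_def
    by (auto simp: subspace_diff subspace_scale matrix_vector_mult_diff_distrib
        inner_diff_right matrix_vector_mult_scaleR)
qed

lemma form_orthogonal_basis_exists:
  assumes sym: "sym_mat (y::real^'n^'n)"
  shows "subspace V \<Longrightarrow> \<exists>T. T \<subseteq> V \<and> independent T \<and> V \<subseteq> span T \<and>
           pairwise (\<lambda>u v. u \<bullet> (y *v v) = 0) T"
proof (induction "dim V" arbitrary: V rule: less_induct)
  case less
  show ?case
  proof (cases "\<forall>v\<in>V. v \<bullet> (y *v v) = 0")
    case True
    obtain T where "T \<subseteq> V" "independent T" "V \<subseteq> span T"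
      by (rule basis_exists)
    then show ?thesis
      using form_eq_0_on_subspace[OF sym less.prems True] by (blast intro: pairwiseI)
  next
    case False
    then obtain v where v: "v \<in> V" "v \<bullet> (y *v v) \<noteq> 0" by blast
    define V' where "V' = {w \<in> V. v \<bullet> (y *v w) = 0}"
    note complement = form_orthogonal_complement[OF less.prems v, folded V'_def]
    obtain T' where T': "T' \<subseteq> V'" "independent T'" "V' \<subseteq> span T'"
      "pairwise (\<lambda>u v. u \<bullet> (y *v v) = 0) T'"
      using less.hyps[OF complement(2) complement(1)] by blast
    have orth: "v \<bullet> (y *v t) = 0" "t \<bullet> (y *v v) = 0" if "t \<in> T'" for t
      using that T'(1) sym_mat_form_commute[OF sym, of v t] by (auto simp: V'_def)
    have "v \<notin> span T'"
      using span_minimal[OF T'(1) complement(1)] v by (auto simp: V'_def)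
    then have "independent (insert v T')"
      using T'(2) by (rule independent_insertI)
    moreover have "V \<subseteq> span (insert v T')"
    proof
      fix w assume "w \<in> V"
      define c where "c = v \<bullet> (y *v w) / (v \<bullet> (y *v v))"
      have "w - c *\<^sub>R v \<in> span (insert v T')"
        using complement(3)[OF \<open>w \<in> V\<close>] T'(3) span_mono[of T' "insert v T'"]
        by (auto simp: c_def)
      then show "w \<in> span (insert v T')"
        by (metis diff_add_cancel insertI1 span_add span_base span_scale)
    qed
    moreover have "pairwise (\<lambda>u v. u \<bullet> (y *v v) = 0) (insert v T')"
      using T'(4) orth by (simp add: pairwise_insert)
    ultimately show ?thesis
      using T'(1) v(1) by (intro exI[of _ "insert v T'"]) (auto simp: V'_def)
  qed
qed

lemma nondegenerate_form_basis_nonisotropic: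
  assumes sym: "sym_mat (y::real^'n^'n)" and "det y \<noteq> 0"
    and "independent T" and "UNIV \<subseteq> span T" and orth: "pairwise (\<lambda>u v. u \<bullet> (y *v v) = 0) T"
    and "t \<in> T"
  shows "t \<bullet> (y *v t) \<noteq> 0"
proof
  assume "t \<bullet> (y *v t) = 0"
  then have "(y *v t) \<bullet> s = 0" if "s \<in> T" for s
    using that orth \<open>t \<in> T\<close> sym_mat_form_commute[OF sym, of t s]
    by (cases "s = t") (auto simp: pairwise_def inner_commute)
  then have "(y *v t) \<bullet> s = 0" for s
    using \<open>UNIV \<subseteq> span T\<close> linear_eq_0_on_span[OF bounded_linear_inner_right[THEN bounded_linear.linear]]
    by blast
  then have "y *v t = 0"
    by (metis inner_eq_zero_iff)
  then have "t = 0"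
    using \<open>det y \<noteq> 0\<close> by (metis invertible_det_nz inj_matrix_vector_mult injD matrix_vector_mult_0_right)
  then show False
    using \<open>independent T\<close> \<open>t \<in> T\<close> dependent_zero by blast
qed

lemma form_sum_pairwise_orthogonal:
  assumes "finite S" and "pairwise (\<lambda>u v. u \<bullet> ((y::real^'n^'n) *v v) = 0) S"
  shows "(\<Sum>s\<in>S. c s *\<^sub>R s) \<bullet> (y *v (\<Sum>s\<in>S. c s *\<^sub>R s)) = (\<Sum>s\<in>S. (c s)\<^sup>2 * (s \<bullet> (y *v s)))"
proof -
  have "(\<Sum>s\<in>S. c s *\<^sub>R s) \<bullet> (y *v (\<Sum>s\<in>S. c s *\<^sub>R s))
      = (\<Sum>t\<in>S. \<Sum>s\<in>S. c s * c t * (s \<bullet> (y *v t)))"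
    by (simp add: linear_sum[OF matrix_vector_mul_linear] matrix_vector_mult_scaleR inner_sum_left
        inner_sum_right sum_distrib_left mult_ac)
  also have "\<dots> = (\<Sum>t\<in>S. \<Sum>s\<in>S. if s = t then (c t)\<^sup>2 * (t \<bullet> (y *v t)) else 0)"
    using assms(2) by (intro sum.cong refl) (auto simp: power2_eq_square pairwise_def)
  finally show ?thesis
    using assms(1) by simp
qed

lemma posdef_on_span:
  assumes "finite P" and "pairwise (\<lambda>u v. u \<bullet> ((y::real^'n^'n) *v v) = 0) P"
    and "\<forall>s\<in>P. s \<bullet> (y *v s) > 0"
  shows "posdef_on y (span P)"
  unfolding posdef_on_def
proof (intro ballI impI)
  fix v assume "v \<in> span P" "v \<noteq> 0"
  then obtain c where c: "v = (\<Sum>s\<in>P. c s *\<^sub>R s)"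
    using span_finite[OF assms(1)] by auto
  have "\<exists>s\<in>P. c s \<noteq> 0"
  proof (rule ccontr)
    assume "\<not> (\<exists>s\<in>P. c s \<noteq> 0)"
    then show False
      using \<open>v \<noteq> 0\<close> unfolding c by simp
  qed
  then obtain s where "s \<in> P" "c s \<noteq> 0"
    by blast
  then have "0 < (\<Sum>s\<in>P. (c s)\<^sup>2 * (s \<bullet> (y *v s)))"
    using assms(1,3) by (intro sum_pos2) auto
  then show "v \<bullet> (y *v v) > 0"
    unfolding c form_sum_pairwise_orthogonal[OF assms(1,2)] .
qed

lemma form_nonpos_on_span:
  assumes "finite N" and "pairwise (\<lambda>u v. u \<bullet> ((y::real^'n^'n) *v v) = 0) N"
    and "\<forall>s\<in>N. s \<bullet> (y *v s) < 0" and "v \<in> span N"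
  shows "v \<bullet> (y *v v) \<le> 0"
proof -
  obtain c where c: "v = (\<Sum>s\<in>N. c s *\<^sub>R s)"
    using span_finite[OF assms(1)] assms(4) by auto
  have "(\<Sum>s\<in>N. (c s)\<^sup>2 * (s \<bullet> (y *v s))) \<le> 0"
    using assms(3) by (intro sum_nonpos mult_nonneg_nonpos) auto
  then show ?thesis
    unfolding c form_sum_pairwise_orthogonal[OF assms(1,2)] .
qed

lemma posdef_subspace_dim_le:
  assumes "subspace V" and "posdef_on (y::real^'n^'n) V"
    and "finite N" and "independent N" and "pairwise (\<lambda>u v. u \<bullet> (y *v v) = 0) N"
    and "\<forall>s\<in>N. s \<bullet> (y *v s) < 0"
  shows "dim V + card N \<le> CARD('n)"
proof -
  have "V \<inter> span N \<subseteq> {0}"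
  proof
    fix w assume "w \<in> V \<inter> span N"
    then have "\<not> w \<bullet> (y *v w) > 0"
      using form_nonpos_on_span[OF assms(3,5,6)] by (simp add: not_less)
    then show "w \<in> {0}"
      using \<open>w \<in> V \<inter> span N\<close> assms(2) by (auto simp: posdef_on_def)
  qed
  then have "dim (V \<inter> span N) = 0"
    by simp
  moreover have "dim {x + z |x z. x \<in> V \<and> z \<in> span N} + dim (V \<inter> span N) = dim V + dim (span N)"
    using assms(1) subspace_span by (rule dim_sums_Int)
  moreover have "dim {x + z |x z. x \<in> V \<and> z \<in> span N} \<le> CARD('n)"
    using dim_subset_UNIV[of "{x + z |x z. x \<in> V \<and> z \<in> span N}"] by simp
  ultimately show ?thesis
    using dim_span_eq_card_independent[OF assms(4)] by linarith
qed

lemma positivity_index_eq_card: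
  assumes sym: "sym_mat (y::real^'n^'n)" and "det y \<noteq> 0"
    and T: "independent T" "UNIV \<subseteq> span T" and orth: "pairwise (\<lambda>u v. u \<bullet> (y *v v) = 0) T"
  shows "Max {dim V | V. subspace V \<and> posdef_on y V} = card {t\<in>T. t \<bullet> (y *v t) > 0}"
proof (rule Max_eqI)
  define P where "P = {t\<in>T. t \<bullet> (y *v t) > 0}"
  define N where "N = {t\<in>T. t \<bullet> (y *v t) < 0}"
  have "finite T"
    using independent_bound[OF T(1)] by blast
  then have fin: "finite P" "finite N"
    by (auto simp: P_def N_def)
  have "span T = UNIV"
    using T(2) by blast
  then have "card T = CARD('n)"
    using dim_span_eq_card_independent[OF T(1)] by simp
  moreover have "T = P \<union> N" "P \<inter> N = {}"
    using nondegenerate_form_basis_nonisotropic[OF assms] by (auto simp: P_def N_def neq_iff)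
  ultimately have card_PN: "card P + card N = CARD('n)"
    using card_Un_disjoint[OF fin] by simp
  have indep: "independent P" "independent N"
    using independent_mono[OF T(1)] by (auto simp: P_def N_def)
  have orth_P: "pairwise (\<lambda>u v. u \<bullet> (y *v v) = 0) P"
    and orth_N: "pairwise (\<lambda>u v. u \<bullet> (y *v v) = 0) N"
    using pairwise_subset[OF orth] by (auto simp: P_def N_def)
  have "dim V \<le> CARD('n)" for V :: "(real^'n) set"
    using dim_subset_UNIV[of V] by simp
  then have "{dim V | V. subspace V \<and> posdef_on y V} \<subseteq> {..CARD('n)}"
    by blast
  then show "finite {dim V | V. subspace V \<and> posdef_on y V}"
    by (rule finite_subset) simp
  have "posdef_on y (span P)"
    using posdef_on_span[OF fin(1) orth_P] by (simp add: P_def)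
  moreover have "dim (span P) = card P"
    using indep(1) by (rule dim_span_eq_card_independent)
  ultimately show "card P \<in> {dim V | V. subspace V \<and> posdef_on y V}"
    by (intro CollectI exI[of _ "span P"]) (simp add: subspace_span)
  show "d \<le> card P" if "d \<in> {dim V | V. subspace V \<and> posdef_on y V}" for d
  proof -
    from that obtain V where V: "d = dim V" "subspace V" "posdef_on y V"
      by blast
    have "dim V + card N \<le> CARD('n)"
      by (rule posdef_subspace_dim_le[OF V(2,3) fin(2) indep(2) orth_N]) (simp add: N_def)
    then show ?thesis
      using card_PN V(1) by linarith
  qed
qed

text \<open>Exactly \<open>npos\<close> frame indices carry \<open>eps npos h = 1\<close>.\<close>

lemma card_rank_le_eq:
  assumes "npos \<le> CARD('n::{finite,linorder})"
  shows "card {h::'n. card {h'. h' \<le> h} \<le> npos} = npos"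
proof -
  define rk where "rk h = card {h'. h' \<le> h}" for h :: 'n
  have "rk x < rk y" if "x < y" for x y
  proof -
    have "{h'. h' \<le> x} \<subseteq> {h'. h' \<le> y}" "y \<notin> {h'. h' \<le> x}"
      using that by auto
    then have "{h'. h' \<le> x} \<subset> {h'. h' \<le> y}"
      by blast
    then show ?thesis
      by (simp add: rk_def psubset_card_mono)
  qed
  then have "strict_mono rk"
    by (rule strict_monoI)
  then have inj: "inj rk"
    by (rule strict_mono_imp_inj_on)
  have rk_pos: "rk h \<ge> 1" for h
    by (auto simp: rk_def Suc_le_eq card_gt_0_iff)
  have "range rk \<subseteq> {1..CARD('n)}"
    using rk_pos by (auto simp: rk_def card_mono)
  moreover have "card (range rk) = card {1..CARD('n)}"
    using card_image[OF inj] by simp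
  ultimately have "range rk = {1..CARD('n)}"
    by (intro card_subset_eq) auto
  then have "card (rk -` {1..npos}) = npos"
    using assms by (subst card_vimage_inj[OF inj]) auto
  moreover have "rk -` {1..npos} = {h. rk h \<le> npos}"
    using rk_pos by auto
  ultimately show ?thesis
    by (simp add: rk_def)
qed

lemma bij_betw_respecting_subsets:
  assumes "finite A" and "finite B" and "I \<subseteq> A" and "P \<subseteq> B"
    and "card A = card B" and "card I = card P"
  obtains phi where "bij_betw phi A B" and "\<And>a. a \<in> A \<Longrightarrow> phi a \<in> P \<longleftrightarrow> a \<in> I"
proof -
  have "finite I" "finite P"
    using assms(1-4) by (simp_all add: finite_subset)
  then obtain f where f: "bij_betw f I P"
    using finite_same_card_bij assms(6) by blast
  have "card (A - I) = card (B - P)"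
    using assms \<open>finite I\<close> \<open>finite P\<close> by (simp add: card_Diff_subset)
  then obtain g where g: "bij_betw g (A - I) (B - P)"
    using finite_same_card_bij[of "A - I" "B - P"] assms(1,2) by auto
  define phi where "phi a = (if a \<in> I then f a else g a)" for a
  have "bij_betw phi I P"
    using f bij_betw_cong[of I phi f P] by (simp add: phi_def)
  moreover have "bij_betw phi (A - I) (B - P)"
    using g bij_betw_cong[of "A - I" phi g "B - P"] by (simp add: phi_def)
  ultimately have "bij_betw phi (I \<union> (A - I)) (P \<union> (B - P))"
    by (rule bij_betw_combine) blast
  moreover have "I \<union> (A - I) = A" "P \<union> (B - P) = B"
    using assms(3,4) by auto
  ultimately have "bij_betw phi A B"
    by simp
  moreover have "phi a \<in> P \<longleftrightarrow> a \<in> I" if "a \<in> A" for a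
  proof (cases "a \<in> I")
    case True
    then show ?thesis
      using bij_betw_apply[OF f] by (simp add: phi_def)
  next
    case False
    then show ?thesis
      using bij_betw_apply[OF g] that by (simp add: phi_def)
  qed
  ultimately show ?thesis
    using that by blast
qed

lemma orthogonal_family_congruent_signature_matrix:
  fixes y :: "('n::{finite,linorder}) mat" and phi :: "'n \<Rightarrow> 'n vect"
  assumes "\<And>h k. h \<noteq> k \<Longrightarrow> phi h \<bullet> (y *v phi k) = 0"
    and "\<And>h. phi h \<bullet> (y *v phi h) / \<bar>phi h \<bullet> (y *v phi h)\<bar> = eps npos h"
  obtains E :: "'n mat" where "transpose E ** (y ** E) = signature_matrix npos"
proof -
  define e where "e h = (1 / sqrt \<bar>phi h \<bullet> (y *v phi h)\<bar>) *\<^sub>R phi h" for h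
  have "e h \<bullet> (y *v e k) = signature_matrix npos $ h $ k" for h k
  proof (cases "h = k")
    case True
    have "e h \<bullet> (y *v e h) = phi h \<bullet> (y *v phi h)
        / (sqrt \<bar>phi h \<bullet> (y *v phi h)\<bar> * sqrt \<bar>phi h \<bullet> (y *v phi h)\<bar>)"
      by (simp add: e_def matrix_vector_mult_scaleR)
    then show ?thesis
      using True assms(2)[of h] by (simp add: signature_matrix_def)
  next
    case False
    then show ?thesis
      using assms(1) by (simp add: e_def signature_matrix_def matrix_vector_mult_scaleR)
  qed
  then have "transpose (\<chi> i h. e h $ i) ** (y ** (\<chi> i h. e h $ i)) = signature_matrix npos"
    by (simp add: vec_eq_iff matrix_matrix_mult_def transpose_def inner_vec_def
        matrix_vector_mult_def sum_distrib_left mult_ac)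
  then show ?thesis
    by (rule that)
qed

lemma signature_frame_exists:
  fixes y :: "('n::{finite,linorder}) mat"
  assumes "npos \<le> CARD('n)" and "y \<in> metric_fibre npos"
  obtains E :: "'n mat" where "transpose E ** (y ** E) = signature_matrix npos"
proof -
  have sym: "sym_mat y" and "det y \<noteq> 0"
    and npos: "npos = Max {dim V | V. subspace V \<and> posdef_on y V}"
    using assms(2) by (auto simp: metric_fibre_def)
  obtain T where T: "independent T" "UNIV \<subseteq> span T" "pairwise (\<lambda>u v. u \<bullet> (y *v v) = 0) T"
    using form_orthogonal_basis_exists[OF sym subspace_UNIV] by blast
  define P where "P = {t\<in>T. t \<bullet> (y *v t) > 0}"
  define I where "I = {h::'n. card {h'. h' \<le> h} \<le> npos}"
  have "finite T"
    using independent_bound[OF T(1)] by blast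
  have "span T = UNIV"
    using T(2) by blast
  then have "card (UNIV :: 'n set) = card T"
    using dim_span_eq_card_independent[OF T(1)] by simp
  moreover have "card I = card P"
    using positivity_index_eq_card[OF sym \<open>det y \<noteq> 0\<close> T] card_rank_le_eq[OF assms(1)]
    by (simp add: I_def P_def npos)
  ultimately obtain phi where phi: "bij_betw phi UNIV T" "\<And>h. phi h \<in> P \<longleftrightarrow> h \<in> I"
    using bij_betw_respecting_subsets[of UNIV T I P] \<open>finite T\<close> by (auto simp: P_def)
  have "phi h \<bullet> (y *v phi h) \<noteq> 0" for h
    using nondegenerate_form_basis_nonisotropic[OF sym \<open>det y \<noteq> 0\<close> T]
      bij_betw_apply[OF phi(1)] by blast
  then have "phi h \<bullet> (y *v phi h) / \<bar>phi h \<bullet> (y *v phi h)\<bar> = eps npos h" for h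
    using phi(2)[of h] bij_betw_apply[OF phi(1), of h]
    by (auto simp: eps_def I_def P_def abs_if)
  moreover have "phi h \<bullet> (y *v phi k) = 0" if "h \<noteq> k" for h k
  proof -
    have "phi h \<noteq> phi k"
      using that bij_betw_imp_inj_on[OF phi(1)] by (auto simp: inj_on_def)
    then show ?thesis
      using pairwiseD(1)[OF T(3) bij_betw_apply[OF phi(1) UNIV_I] bij_betw_apply[OF phi(1) UNIV_I]]
      by blast
  qed
  ultimately show ?thesis
    using orthogonal_family_congruent_signature_matrix that by blast
qed

lemma det_signature_matrix_nonzero: "det (signature_matrix npos :: ('n::{finite,linorder}) mat) \<noteq> 0"
  by (subst det_diagonal) (auto simp: signature_matrix_def eps_def)

lemma qmat_eq_if_congruent:
  fixes E y :: "('n::{finite,linorder}) mat"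
  assumes "transpose E ** (y ** E) = signature_matrix npos"
  shows "invertible E" and "qmat npos E = y"
proof -
  have "det (transpose E ** (y ** E)) \<noteq> 0"
    using assms det_signature_matrix_nonzero by simp
  then have "det E \<noteq> 0"
    by (simp add: det_mul det_transpose)
  then show inv: "invertible E"
    by (simp add: invertible_det_nz)
  have "qmat npos E = transpose (matrix_inv E) ** ((transpose E ** (y ** E)) ** matrix_inv E)"
    by (simp add: qmat_eq assms)
  also have "\<dots> = transpose (E ** matrix_inv E) ** (y ** (E ** matrix_inv E))"
    by (simp add: matrix_transpose_mul matrix_mul_assoc)
  finally show "qmat npos E = y"
    by (simp add: matrix_mul_matrix_inv[OF inv])
qed

lemma frame_exists:
  fixes y :: "('n::{finite,linorder}) mat"
  assumes "npos \<le> CARD('n)" and "y \<in> metric_fibre npos"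
  obtains E where "invertible E" and "qmat npos E = y"
  using signature_frame_exists[OF assms] qmat_eq_if_congruent by metis

section \<open>Coordinate form of condition \<open>(C\<^sub>M)\<close>\<close>

lemma CM_at_iff:
  fixes y :: "('n::{finite,linorder}) mat"
  assumes "invertible E\<^sub>0" and "qmat npos E\<^sub>0 = y"
  shows "CM_at npos G y A \<longleftrightarrow> (\<forall>xi a b. (\<Sum>k\<in>UNIV. G (min a b) (max a b) k * xi $ k)
      = - (y ** connection_matrix A xi + transpose (connection_matrix A xi) ** y) $ a $ b)"
proof -
  have gamma_eq: "gammaM G (xi, eta) = (xi, eta) - qstar npos E (hlift A E xi) \<longleftrightarrow>
      (\<forall>a b. (\<Sum>k\<in>UNIV. G (min a b) (max a b) k * xi $ k)
        = - (y ** connection_matrix A xi + transpose (connection_matrix A xi) ** y) $ a $ b)"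
    if "invertible E" "qmat npos E = y" for xi eta E
    by (simp add: qstar_hlift[OF that] gammaM_def vec_eq_iff)
  txt \<open>The vertical part \<open>eta\<close> cancels and the right-hand side does not depend on the
    frame, so \<open>eta = 0\<close> and the single frame \<open>E\<^sub>0\<close> suffice.\<close>
  have "sym_mat (0::'n mat)"
    by (simp add: sym_mat_def transpose_def vec_eq_iff)
  then show ?thesis
    unfolding CM_at_def using gamma_eq assms by blast
qed

lemma metric_connection_entry:
  assumes "sym_mat y"
  shows "(y ** connection_matrix A xi + transpose (connection_matrix A xi) ** y) $ a $ b
       = (\<Sum>j\<in>UNIV. (\<Sum>c\<in>UNIV. y $ c $ b * A c j a + y $ c $ a * A c j b) * xi $ j)"
proof -
  have "y $ a $ c = y $ c $ a" for c
  proof -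
    have "y $ a $ c = transpose y $ a $ c"
      using assms by (simp add: sym_mat_def)
    then show ?thesis
      by (simp add: transpose_def)
  qed
  then have "(y ** connection_matrix A xi) $ a $ b = (\<Sum>c\<in>UNIV. \<Sum>j\<in>UNIV. y $ c $ a * A c j b * xi $ j)"
    by (simp add: matrix_matrix_mult_def connection_matrix_def sum_distrib_left mult.assoc)
  also have "\<dots> = (\<Sum>j\<in>UNIV. \<Sum>c\<in>UNIV. y $ c $ a * A c j b * xi $ j)"
    by (rule sum.swap)
  finally have left: "(y ** connection_matrix A xi) $ a $ b = \<dots>" .
  have "(transpose (connection_matrix A xi) ** y) $ a $ b
      = (\<Sum>c\<in>UNIV. (\<Sum>j\<in>UNIV. A c j a * xi $ j) * y $ c $ b)"
    by (simp add: matrix_matrix_mult_def connection_matrix_def transpose_def)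
  also have "\<dots> = (\<Sum>c\<in>UNIV. \<Sum>j\<in>UNIV. y $ c $ b * A c j a * xi $ j)"
    unfolding sum_distrib_right by (intro sum.cong refl) (simp add: mult_ac)
  also have "\<dots> = (\<Sum>j\<in>UNIV. \<Sum>c\<in>UNIV. y $ c $ b * A c j a * xi $ j)"
    by (rule sum.swap)
  finally have right: "(transpose (connection_matrix A xi) ** y) $ a $ b = \<dots>" .
  have "(\<Sum>j\<in>UNIV. (\<Sum>c\<in>UNIV. y $ c $ b * A c j a + y $ c $ a * A c j b) * xi $ j)
      = (\<Sum>j\<in>UNIV. \<Sum>c\<in>UNIV. y $ c $ b * A c j a * xi $ j)
        + (\<Sum>j\<in>UNIV. \<Sum>c\<in>UNIV. y $ c $ a * A c j b * xi $ j)"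
    by (simp only: sum_distrib_right distrib_right sum.distrib)
  then show ?thesis
    by (simp only: vector_add_component left right add.commute)
qed

lemma sum_mult_component_eq_iff:
  "(\<forall>xi::real^'n. (\<Sum>m\<in>UNIV. f m * xi $ m) = (\<Sum>m\<in>UNIV. g m * xi $ m)) \<longleftrightarrow> (\<forall>m. f m = g m)"
proof -
  have "(\<Sum>m\<in>UNIV. f m * axis j 1 $ m) = f j" for f :: "'n \<Rightarrow> real" and j
    by (simp add: axis_def if_distrib[of "\<lambda>x. _ * x"] cong: if_cong)
  then show ?thesis
    by (auto dest: spec[of _ "axis _ 1"])
qed

lemma CM_at_iff_coefficients:
  fixes y :: "('n::{finite,linorder}) mat"
  assumes "npos \<le> CARD('n)" and "y \<in> metric_fibre npos"
  shows "CM_at npos G y A \<longleftrightarrow> (\<forall>j k l. k \<le> l \<longrightarrow>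
      G k l j = - (\<Sum>a\<in>UNIV. y $ a $ l * A a j k + y $ a $ k * A a j l))"
proof -
  obtain E where E: "invertible E" "qmat npos E = y"
    using frame_exists[OF assms] .
  have sym: "sym_mat y"
    using assms(2) by (simp add: metric_fibre_def)
  define c where "c k l j = - (\<Sum>a\<in>UNIV. y $ a $ l * A a j k + y $ a $ k * A a j l)" for k l j
  have c_sym: "c l k j = c k l j" for k l j
    by (simp add: c_def add.commute)
  have "CM_at npos G y A \<longleftrightarrow>
      (\<forall>xi a b. (\<Sum>j\<in>UNIV. G (min a b) (max a b) j * xi $ j) = (\<Sum>j\<in>UNIV. c a b j * xi $ j))"
    unfolding CM_at_iff[OF E] metric_connection_entry[OF sym] by (simp add: c_def sum_negf)
  also have "\<dots> \<longleftrightarrow> (\<forall>a b j. G (min a b) (max a b) j = c a b j)"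
    using sum_mult_component_eq_iff by blast
  also have "\<dots> \<longleftrightarrow> (\<forall>j k l. k \<le> l \<longrightarrow> G k l j = c k l j)"
  proof (intro iffI allI impI)
    fix j k l :: 'n
    assume "\<forall>a b j. G (min a b) (max a b) j = c a b j" and "k \<le> l"
    then show "G k l j = c k l j"
      by (metis max.absorb2 min.absorb1)
  next
    fix a b j :: 'n
    assume H: "\<forall>j k l. k \<le> l \<longrightarrow> G k l j = c k l j"
    show "G (min a b) (max a b) j = c a b j"
    proof (cases "a \<le> b")
      case True
      then show ?thesis using H by simp
    next
      case False
      then show ?thesis using H c_sym by (simp add: min_def max_def)
    qed
  qed
  finally show ?thesis
    by (simp add: c_def)
qed

theorem proposition3:
  fixes npos :: nat
    and U :: "('n::{finite,linorder}) vect set"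
    and G :: "'n vect \<Rightarrow> 'n mat \<Rightarrow> ('n \<Rightarrow> 'n \<Rightarrow> 'n \<Rightarrow> real)
              \<Rightarrow> 'n \<Rightarrow> 'n \<Rightarrow> 'n \<Rightarrow> real"
  assumes "npos \<le> CARD('n)"
  shows "(\<forall>x\<in>U. \<forall>y\<in>metric_fibre npos. \<forall>A. CM_at npos (G x y A) y A)
     \<longleftrightarrow> (\<forall>x\<in>U. \<forall>y\<in>metric_fibre npos. \<forall>A. \<forall>j k l. k \<le> l \<longrightarrow>
            G x y A k l j = - (\<Sum>a\<in>UNIV. y $ a $ l * A a j k + y $ a $ k * A a j l))"
  using CM_at_iff_coefficients[OF assms] by simp

end
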